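(* For $\mathfrak{g}=sl(n)$ with $G=GL(n)$, the Belavin–Drinfeld cohomology $H^1_{BD}(r_{DJ})$ associated to the Drinfeld–Jimbo $r$-matrix is trivial, i.e. every cocycle $X\in GL(n,\overline{\mathbb{K}})$ with $X^{-1}\sigma(X)\in C(r_{DJ})$ for all $\sigma\in\mathrm{Gal}(\overline{\mathbb{K}}/\mathbb{K})$ is of the form $X=QC$ with $Q\in GL(n,\mathbb{K})$ and $C\in C(r_{DJ})$.
   Context: $\mathbb{K}=\mathbb{C}((\hbar))$, $\overline{\mathbb{K}}$ its algebraic closure, Galois group acting entrywise. $GL(n)$ acts on $sl(n)$ by $\mathrm{Ad}_X(a)=XaX^{-1}$. $e_{ik}$ are matrix units, $\Omega=\sum_{i,k}e_{ik}\otimes e_{ki}-\frac1n I\otimes I$, $\Omega_0=\sum_i e_{ii}\otimes e_{ii}-\frac1nI\otimes I$ its Cartan part. The Drinfeld–Jimbo $r$-matrix is $r_{DJ}=\sum_{i<k}e_{ik}\otimes e_{ki}+\frac12\Omega_0$. $C(r)=\{X\in GL(n,\overline{\mathbb{K}}):(\mathrm{Ad}_X\otimes\mathrm{Ad}_X)(r)=r\}$. A cocycle associated to $r$ is $X\in GL(n,\overline{\mathbb{K}})$ with $X^{-1}\sigma(X)\in C(r)$ for all $\sigma$; cocycles $X_1,X_2$ are equivalent if $X_1=QX_2C$ with $Q\in GL(n,\mathbb{K})$, $C\in C(r)$; $H^1_{BD}(r)$ is the set of classes, called trivial if every cocycle is equivalent to the identity. *)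

theory Defs
  imports "HOL-Computational_Algebra.Formal_Laurent_Series"
          "HOL-Computational_Algebra.Polynomial"
          "Jordan_Normal_Form.Gauss_Jordan_Elimination"
begin

text \<open>The base field K = C((hbar)) is the type complex fls. An algebraic closure of K is
  modelled as a field type 'a together with an embedding emb of K into 'a such that 'a is
  algebraically closed and algebraic over the image of emb.\<close>

definition is_field_hom :: "('b::field \<Rightarrow> 'a::field) \<Rightarrow> bool" where
  "is_field_hom f \<longleftrightarrow> f 1 = 1 \<and> (\<forall>x y. f (x + y) = f x + f y) \<and> (\<forall>x y. f (x * y) = f x * f y)"

definition is_alg_closure_of_K :: "(complex fls \<Rightarrow> 'a::field) \<Rightarrow> bool" where
  "is_alg_closure_of_K emb \<longleftrightarrow>
     is_field_hom emb \<and>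
     (\<forall>p :: 'a poly. degree p > 0 \<longrightarrow> (\<exists>x. poly p x = 0)) \<and>
     (\<forall>x :: 'a. \<exists>p :: complex fls poly. p \<noteq> 0 \<and> poly (map_poly emb p) x = 0)"

definition galois_group :: "(complex fls \<Rightarrow> 'a::field) \<Rightarrow> ('a \<Rightarrow> 'a) set" where
  "galois_group emb = {\<sigma>. bij \<sigma> \<and> is_field_hom \<sigma> \<and> (\<forall>c. \<sigma> (emb c) = emb c)}"

definition minv :: "'a::field mat \<Rightarrow> 'a mat" where
  "minv X = the (mat_inverse X)"

text \<open>An element of sl(n) tensor sl(n) (inside M_n tensor M_n) is represented by its coefficient
  tensor: r i j k l is the coefficient of e_ij tensor e_kl.\<close>

text \<open>Drinfeld-Jimbo r-matrix: sum over i<k of e_ik tensor e_ki plus (1/2) Omega_0, where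
  Omega_0 = sum_i e_ii tensor e_ii - (1/n) I tensor I and I tensor I = sum_{i,k} e_ii tensor e_kk.\<close>
definition r_DJ :: "nat \<Rightarrow> nat \<Rightarrow> nat \<Rightarrow> nat \<Rightarrow> nat \<Rightarrow> 'a::field" where
  "r_DJ n a b c d =
     (if a < b \<and> c = b \<and> d = a then 1 else 0)
     + (1/2) * ((if a = b \<and> c = d \<and> a = c then 1 else 0)
                - (if a = b \<and> c = d then 1 / of_nat n else 0))"

text \<open>(Ad_X tensor Ad_X)(r), where Ad_X(e_ij) = X e_ij X^{-1}, in coefficient form.\<close>
definition Ad_tensor :: "nat \<Rightarrow> 'a::field mat \<Rightarrow> (nat \<Rightarrow> nat \<Rightarrow> nat \<Rightarrow> nat \<Rightarrow> 'a)
                         \<Rightarrow> nat \<Rightarrow> nat \<Rightarrow> nat \<Rightarrow> nat \<Rightarrow> 'a" where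
  "Ad_tensor n X r a b c d =
     (\<Sum>i<n. \<Sum>j<n. \<Sum>k<n. \<Sum>l<n.
        X $$ (a, i) * minv X $$ (j, b) * X $$ (c, k) * minv X $$ (l, d) * r i j k l)"

definition centralizer :: "nat \<Rightarrow> (nat \<Rightarrow> nat \<Rightarrow> nat \<Rightarrow> nat \<Rightarrow> 'a::field) \<Rightarrow> 'a mat set" where
  "centralizer n r = {X \<in> carrier_mat n n. invertible_mat X \<and>
      (\<forall>a<n. \<forall>b<n. \<forall>c<n. \<forall>d<n. Ad_tensor n X r a b c d = r a b c d)}"

definition is_cocycle :: "(complex fls \<Rightarrow> 'a::field) \<Rightarrow> nat \<Rightarrow> (nat \<Rightarrow> nat \<Rightarrow> nat \<Rightarrow> nat \<Rightarrow> 'a)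
                          \<Rightarrow> 'a mat \<Rightarrow> bool" where
  "is_cocycle emb n r X \<longleftrightarrow> X \<in> carrier_mat n n \<and> invertible_mat X \<and>
     (\<forall>\<sigma> \<in> galois_group emb. minv X * map_mat \<sigma> X \<in> centralizer n r)"

definition GL_K :: "(complex fls \<Rightarrow> 'a::field) \<Rightarrow> nat \<Rightarrow> 'a mat set" where
  "GL_K emb n = {Q \<in> carrier_mat n n. invertible_mat Q \<and>
      (\<forall>i<n. \<forall>j<n. Q $$ (i, j) \<in> range emb)}"

end

theory Submission
  imports Defs "Jordan_Normal_Form.Determinant"
begin

text \<open>For 2 \<noteq> 0 the stabiliser C(r_DJ) of the Drinfeld-Jimbo r-matrix in GL(n) is the
  diagonal torus: invariance of r_DJ under conjugation by Y allows at most one nonzero entry in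
  each row and each column of Y, and forces these entries to move strictly to the right as one
  goes down, so for invertible Y they sit on the diagonal. Hence for a cocycle X each
  X^-1 \<sigma>(X) is diagonal, i.e. every Galois automorphism \<sigma> multiplies each column of X by a
  scalar. Ratios of entries of one column are therefore fixed by the whole Galois group, and so
  lie in K: in characteristic 0 the fixed field of Gal(Kbar/K) is K, since a K-embedding of a
  simple extension K(x) sending x to any other root of its minimal polynomial extends, by Zorn's
  lemma, to an automorphism of Kbar. Dividing each column of X by one of its nonzero entries
  gives X = Q D with Q \<in> GL(n, K) and D diagonal and invertible, hence D \<in> C(r_DJ).\<close>

lemma sum_sum_delta:
  fixes n :: nat and g :: "nat \<Rightarrow> nat \<Rightarrow> 'a::semiring_0"
  assumes "u < n" "v < n"
  shows "(\<Sum>i<n. \<Sum>k<n. g i k * (if i = u \<and> k = v then c i k else 0)) = g u v * c u v"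
proof -
  have "(\<Sum>k<n. g i k * (if i = u \<and> k = v then c i k else 0)) = (if i = u then g i v * c i v else 0)"
    for i
  proof -
    have "(\<Sum>k<n. g i k * (if i = u \<and> k = v then c i k else 0)) =
        (\<Sum>k<n. if k = v then (if i = u then g i v * c i v else 0) else 0)"
      by (rule sum.cong) auto
    with assms show ?thesis
      by simp
  qed
  with assms show ?thesis
    by simp
qed

lemma sum_nested_swap:
  "(\<Sum>b\<in>B. \<Sum>d\<in>D. \<Sum>i\<in>I. \<Sum>j\<in>J. \<Sum>k\<in>K. \<Sum>l\<in>L. f b d i j k l) =
   (\<Sum>i\<in>I. \<Sum>k\<in>K. \<Sum>j\<in>J. \<Sum>l\<in>L. \<Sum>b\<in>B. \<Sum>d\<in>D. f b d i j k l :: 'a::comm_monoid_add)"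
  unfolding sum.cartesian_product
  by (rule sum.reindex_bij_witness[where i = "\<lambda>(i, k, j, l, b, d). (b, d, i, j, k, l)"
      and j = "\<lambda>(b, d, i, j, k, l). (i, k, j, l, b, d)"]) auto

lemma sum_eq_single_point:
  assumes "finite A" "a \<in> A" "\<And>y. y \<in> A \<Longrightarrow> y \<noteq> a \<Longrightarrow> f y = 0"
  shows "sum f A = f a"
  using assms sum.remove[of A a f] sum.neutral[of "A - {a}" f] by simp

lemma add_mult_diff_cancel:
  fixes c :: "'a::comm_ring"
  shows "x + c * (u - w) = x' + c * (u' - w) \<Longrightarrow> x + c * u = x' + c * u'"
  by (simp add: algebra_simps)

lemma half_eq_if_imp_zero:
  fixes z :: "'a::field"
  assumes two: "(2::'a) \<noteq> 0" and eq: "1/2 * z = (if P then z else 0)"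
  shows "z = 0"
proof -
  have "z = 2 * (1/2 * z)"
    using two by (simp add: mult.assoc[symmetric])
  also have "\<dots> = 2 * (if P then z else 0)"
    by (simp only: eq)
  finally have "z = 2 * (if P then z else 0)" .
  then show ?thesis
    by (cases P) (simp_all only: if_True if_False mult_2 mult_zero_right add_cancel_right_right)
qed

lemma strict_mono_on_lessThan_ge:
  fixes \<pi> :: "nat \<Rightarrow> nat"
  assumes "strict_mono_on {..<n} \<pi>"
  shows "a < n \<Longrightarrow> a \<le> \<pi> a"
proof (induction a)
  case (Suc a)
  then have "\<pi> a < \<pi> (Suc a)"
    using strict_mono_onD[OF assms] by simp
  with Suc show ?case
    by simp
qed simp

lemma strict_mono_on_lessThan_eq_self:
  fixes \<pi> :: "nat \<Rightarrow> nat"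
  assumes mono: "strict_mono_on {..<n} \<pi>" and range: "\<pi> ` {..<n} \<subseteq> {..<n}" and a: "a < n"
  shows "\<pi> a = a"
proof -
  define \<rho> where "\<rho> b = n - 1 - \<pi> (n - 1 - b)" for b
  have "strict_mono_on {..<n} \<rho>"
  proof (rule strict_mono_onI)
    fix b d assume "b \<in> {..<n}" "d \<in> {..<n}" "b < d"
    then have "n - 1 - d < n - 1 - b" "n - 1 - b < n" "n - 1 - d < n"
      by auto
    then have "\<pi> (n - 1 - d) < \<pi> (n - 1 - b)" "\<pi> (n - 1 - b) \<in> {..<n}"
      using strict_mono_onD[OF mono] range by blast+
    then show "\<rho> b < \<rho> d"
      unfolding \<rho>_def by auto
  qed
  from strict_mono_on_lessThan_ge[OF this, of "n - 1 - a"] a range have "\<pi> a \<le> a"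
    unfolding \<rho>_def by auto
  with strict_mono_on_lessThan_ge[OF mono a] show ?thesis
    by simp
qed

section \<open>The algebraic closure of K and its K-automorphisms\<close>

lemma field_hom_if_is_field_hom:
  assumes "is_field_hom f"
  shows "field_hom f"
proof -
  have add: "f (x + y) = f x + f y" and mult: "f (x * y) = f x * f y" and one: "f 1 = 1" for x y
    using assms unfolding is_field_hom_def by blast+
  have "f 0 = 0"
    using add[of 0 0] by (metis add.right_neutral add_left_cancel)
  then show ?thesis
    by unfold_locales (simp_all add: add mult one)
qed

lemma galois_group_field_hom: "\<sigma> \<in> galois_group emb \<Longrightarrow> field_hom \<sigma>"
  unfolding galois_group_def by (blast intro: field_hom_if_is_field_hom)

definition poly_over :: "'a set \<Rightarrow> 'a::zero poly \<Rightarrow> bool" where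
  "poly_over S p \<longleftrightarrow> (\<forall>i. coeff p i \<in> S)"

lemma poly_over_pCons: "poly_over S (pCons c p) \<longleftrightarrow> c \<in> S \<and> poly_over S p"
  unfolding poly_over_def by (metis coeff_pCons_0 coeff_pCons_Suc not0_implies_Suc)

locale algebraic_closure_of_K =
  fixes emb :: "complex fls \<Rightarrow> 'a::field"
  assumes alg_closure: "is_alg_closure_of_K emb"
begin

sublocale emb: field_hom emb
  using alg_closure field_hom_if_is_field_hom unfolding is_alg_closure_of_K_def by blast

lemma algebraically_closed: "degree (p :: 'a poly) > 0 \<Longrightarrow> \<exists>x. poly p x = 0"
  using alg_closure unfolding is_alg_closure_of_K_def by blast

lemma algebraic_over_K: "\<exists>p. p \<noteq> 0 \<and> poly (map_poly emb p) x = 0"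
  using alg_closure unfolding is_alg_closure_of_K_def by blast

lemma map_poly_emb_eq_0_iff [simp]: "map_poly emb p = 0 \<longleftrightarrow> p = 0"
  by (rule map_poly_eq_0_iff) auto

lemma of_nat_eq_0_iff_in_closure: "(of_nat k :: 'a) = 0 \<longleftrightarrow> k = 0"
  by (metis emb.hom_0_iff emb.hom_of_nat of_nat_eq_0_iff)

lemma pderiv_eq_0_imp_degree_0:
  assumes "pderiv (p :: 'a poly) = 0"
  shows "degree p = 0"
proof (rule ccontr)
  assume "degree p \<noteq> 0"
  then have "coeff (pderiv p) (degree p - 1) = of_nat (degree p) * lead_coeff p"
    by (simp add: coeff_pderiv)
  with assms \<open>degree p \<noteq> 0\<close> show False
    by (simp add: of_nat_eq_0_iff_in_closure)
qed

definition K_subring :: "'a set \<Rightarrow> bool" where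
  "K_subring S \<longleftrightarrow> range emb \<subseteq> S \<and>
     (\<forall>a\<in>S. \<forall>b\<in>S. a + b \<in> S \<and> a * b \<in> S) \<and> (\<forall>a\<in>S. - a \<in> S)"

definition K_hom_on :: "'a set \<Rightarrow> ('a \<Rightarrow> 'a) \<Rightarrow> bool" where
  "K_hom_on S f \<longleftrightarrow> (\<forall>c. f (emb c) = emb c) \<and>
     (\<forall>a\<in>S. \<forall>b\<in>S. f (a + b) = f a + f b \<and> f (a * b) = f a * f b)"

context
  fixes S :: "'a set"
  assumes S: "K_subring S"
begin

lemma K_subring_emb: "emb c \<in> S"
  using S unfolding K_subring_def by blast

lemma K_subring_0: "0 \<in> S" and K_subring_1: "1 \<in> S"
  using K_subring_emb[of 0] K_subring_emb[of 1] by simp_all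

lemma K_subring_add: "a \<in> S \<Longrightarrow> b \<in> S \<Longrightarrow> a + b \<in> S"
  and K_subring_mult: "a \<in> S \<Longrightarrow> b \<in> S \<Longrightarrow> a * b \<in> S"
  and K_subring_uminus: "a \<in> S \<Longrightarrow> - a \<in> S"
  using S unfolding K_subring_def by blast+

lemma K_subring_diff: "a \<in> S \<Longrightarrow> b \<in> S \<Longrightarrow> a - b \<in> S"
  using K_subring_add[of a "- b"] K_subring_uminus[of b] by simp

lemma K_subring_sum: "(\<And>i. i \<in> A \<Longrightarrow> g i \<in> S) \<Longrightarrow> sum g A \<in> S"
  by (induction A rule: infinite_finite_induct) (auto simp: K_subring_0 K_subring_add)

lemma K_subring_poly: "poly_over S p \<Longrightarrow> a \<in> S \<Longrightarrow> poly p a \<in> S"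
  by (induction p) (auto simp: poly_over_pCons K_subring_0 K_subring_add K_subring_mult)

lemma poly_over_0: "poly_over S 0"
  and poly_over_const: "a \<in> S \<Longrightarrow> poly_over S [:a:]"
  and poly_over_X: "poly_over S [:0, 1:]"
  and poly_over_map_emb: "poly_over S (map_poly emb q)"
  unfolding poly_over_def
  by (auto simp: K_subring_0 K_subring_1 K_subring_emb coeff_pCons coeff_map_poly split: nat.split)

lemma poly_over_add: "poly_over S p \<Longrightarrow> poly_over S q \<Longrightarrow> poly_over S (p + q)"
  and poly_over_diff: "poly_over S p \<Longrightarrow> poly_over S q \<Longrightarrow> poly_over S (p - q)"
  and poly_over_uminus: "poly_over S p \<Longrightarrow> poly_over S (- p)"
  and poly_over_mult: "poly_over S p \<Longrightarrow> poly_over S q \<Longrightarrow> poly_over S (p * q)"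
  and poly_over_smult: "c \<in> S \<Longrightarrow> poly_over S p \<Longrightarrow> poly_over S (Polynomial.smult c p)"
  and poly_over_monom: "c \<in> S \<Longrightarrow> poly_over S (monom c k)"
  unfolding poly_over_def
  by (simp_all add: K_subring_0 K_subring_add K_subring_diff K_subring_uminus K_subring_mult
      K_subring_sum coeff_mult)

text \<open>Elements of S are algebraic over K, so S is a field.\<close>
lemma K_subring_inverse:
  assumes a: "a \<in> S"
  shows "inverse a \<in> S"
proof (cases "a = 0")
  case False
  have "p \<noteq> 0 \<Longrightarrow> poly (map_poly emb p) a = 0 \<Longrightarrow> inverse a \<in> S" for p
  proof (induction p)
    case (pCons c p)
    let ?q = "poly (map_poly emb p) a"
    have root: "emb c + a * ?q = 0"
      using pCons.prems by (simp add: map_poly_pCons)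
    show ?case
    proof (cases "c = 0")
      case True
      with pCons.prems root \<open>a \<noteq> 0\<close> show ?thesis
        by (intro pCons.IH) auto
    next
      case False
      have "a * ?q = - emb c"
        using root by (simp add: eq_neg_iff_add_eq_0 add.commute)
      have "a * (- ?q * emb (inverse c)) = - (a * ?q) * inverse (emb c)"
        by (simp add: emb.hom_inverse algebra_simps)
      also have "\<dots> = 1"
        using \<open>a * ?q = - emb c\<close> False by simp
      finally have "inverse a = - ?q * emb (inverse c)"
        by (rule inverse_unique)
      moreover have "?q \<in> S"
        using K_subring_poly[OF poly_over_map_emb a] .
      ultimately show ?thesis
        by (simp add: K_subring_mult K_subring_uminus K_subring_emb)
    qed
  qed simp
  then show ?thesis
    using algebraic_over_K by blast
qed (simp add: K_subring_0)

end

context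
  fixes S :: "'a set" and f :: "'a \<Rightarrow> 'a"
  assumes S: "K_subring S" and f: "K_hom_on S f"
begin

lemma K_hom_on_emb: "f (emb c) = emb c"
  using f unfolding K_hom_on_def by blast

lemma K_hom_on_0: "f 0 = 0" and K_hom_on_1: "f 1 = 1"
  using K_hom_on_emb[of 0] K_hom_on_emb[of 1] by simp_all

lemma K_hom_on_add: "a \<in> S \<Longrightarrow> b \<in> S \<Longrightarrow> f (a + b) = f a + f b"
  and K_hom_on_mult: "a \<in> S \<Longrightarrow> b \<in> S \<Longrightarrow> f (a * b) = f a * f b"
  using f unfolding K_hom_on_def by blast+

lemma K_hom_on_uminus: "a \<in> S \<Longrightarrow> f (- a) = - f a"
  using K_hom_on_add[of a "- a"] K_subring_uminus[OF S, of a] K_hom_on_0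
  by (simp add: eq_neg_iff_add_eq_0 add.commute)

lemma K_hom_on_diff: "a \<in> S \<Longrightarrow> b \<in> S \<Longrightarrow> f (a - b) = f a - f b"
  using K_hom_on_add[of a "- b"] K_hom_on_uminus[of b] K_subring_uminus[OF S, of b] by simp

lemma K_hom_on_sum: "(\<And>i. i \<in> A \<Longrightarrow> g i \<in> S) \<Longrightarrow> f (sum g A) = (\<Sum>i\<in>A. f (g i))"
  by (induction A rule: infinite_finite_induct)
    (simp_all add: K_hom_on_0 K_hom_on_add K_subring_sum[OF S])

lemma K_hom_on_poly: "poly_over S p \<Longrightarrow> a \<in> S \<Longrightarrow> f (poly p a) = poly (map_poly f p) (f a)"
  by (induction p) (simp_all add: poly_over_pCons map_poly_pCons K_hom_on_0 K_hom_on_add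
      K_hom_on_mult K_subring_mult[OF S] K_subring_poly[OF S])

lemma map_poly_K_hom_on_add:
  "poly_over S p \<Longrightarrow> poly_over S q \<Longrightarrow> map_poly f (p + q) = map_poly f p + map_poly f q"
  and map_poly_K_hom_on_diff:
  "poly_over S p \<Longrightarrow> poly_over S q \<Longrightarrow> map_poly f (p - q) = map_poly f p - map_poly f q"
  by (auto intro!: poly_eqI simp: coeff_map_poly K_hom_on_0 K_hom_on_add K_hom_on_diff poly_over_def)

lemma map_poly_K_hom_on_mult:
  assumes p: "poly_over S p" and q: "poly_over S q"
  shows "map_poly f (p * q) = map_poly f p * map_poly f q"
proof (rule poly_eqI)
  fix k
  have "coeff (map_poly f (p * q)) k = f (\<Sum>i\<le>k. coeff p i * coeff q (k - i))"
    by (simp add: coeff_map_poly K_hom_on_0 coeff_mult)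
  also have "\<dots> = (\<Sum>i\<le>k. f (coeff p i) * f (coeff q (k - i)))"
    using p q by (simp add: K_hom_on_sum K_hom_on_mult K_subring_mult[OF S] poly_over_def)
  also have "\<dots> = coeff (map_poly f p * map_poly f q) k"
    by (simp add: coeff_map_poly K_hom_on_0 coeff_mult)
  finally show "coeff (map_poly f (p * q)) k = coeff (map_poly f p * map_poly f q) k" .
qed

end

definition min_poly_over :: "'a set \<Rightarrow> 'a \<Rightarrow> 'a poly \<Rightarrow> bool" where
  "min_poly_over S z m \<longleftrightarrow> poly_over S m \<and> lead_coeff m = 1 \<and> poly m z = 0 \<and>
     (\<forall>r. poly_over S r \<longrightarrow> r \<noteq> 0 \<longrightarrow> poly r z = 0 \<longrightarrow> degree m \<le> degree r)"

lemma min_poly_over_exists: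
  assumes S: "K_subring S"
  shows "\<exists>m. min_poly_over S z m"
proof -
  let ?P = "\<lambda>r. poly_over S r \<and> r \<noteq> 0 \<and> poly r z = 0"
  obtain p where "p \<noteq> 0" "poly (map_poly emb p) z = 0"
    using algebraic_over_K by blast
  then have "?P (map_poly emb p)"
    using poly_over_map_emb[OF S] by simp
  then obtain r where r: "?P r" and r_min: "\<And>y. ?P y \<Longrightarrow> degree r \<le> degree y"
    using ex_has_least_nat[of ?P _ degree] by blast
  have "lead_coeff r \<in> S"
    using r unfolding poly_over_def by blast
  then have "poly_over S (Polynomial.smult (inverse (lead_coeff r)) r)"
    using r by (blast intro: poly_over_smult[OF S] K_subring_inverse[OF S])
  with r r_min have "min_poly_over S z (Polynomial.smult (inverse (lead_coeff r)) r)"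
    unfolding min_poly_over_def by simp
  then show ?thesis ..
qed

lemma min_poly_over_degree_pos: "min_poly_over S z m \<Longrightarrow> degree m > 0"
  unfolding min_poly_over_def by (auto elim!: degree_eq_zeroE intro!: gr0I)

lemma min_poly_over_dvd:
  assumes S: "K_subring S" and m: "min_poly_over S z m"
  shows "poly_over S e \<Longrightarrow> poly e z = 0 \<Longrightarrow> \<exists>q. poly_over S q \<and> e = m * q"
proof (induction "degree e" arbitrary: e rule: less_induct)
  case less
  show ?case
  proof (cases "e = 0")
    case True
    then show ?thesis
      using poly_over_0[OF S] by auto
  next
    case False
    then have deg_le: "degree m \<le> degree e"
      using m less.prems unfolding min_poly_over_def by blast
    define t where "t = monom (lead_coeff e) (degree e - degree m)"
    define e' where "e' = e - t * m"
    have t: "poly_over S t"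
      using less.prems(1) unfolding t_def by (intro poly_over_monom[OF S]) (simp add: poly_over_def)
    have e': "poly_over S e'" "poly e' z = 0"
      using less.prems m t unfolding e'_def min_poly_over_def
      by (simp_all add: poly_over_diff[OF S] poly_over_mult[OF S])
    have "degree (t * m) \<le> degree e"
      using deg_le degree_mult_le[of t m] degree_monom_le[of "lead_coeff e" "degree e - degree m"]
      unfolding t_def by linarith
    then have "degree e' \<le> degree e"
      unfolding e'_def by (simp add: degree_diff_le)
    moreover have "coeff (t * m) (degree e) = lead_coeff e"
      using deg_le m unfolding t_def min_poly_over_def coeff_monom_mult by simp
    then have "coeff e' (degree e) = 0"
      unfolding e'_def by simp
    ultimately have "e' = 0 \<or> degree e' < degree e"
      using le_neq_implies_less leading_coeff_0_iff by metis
    then show ?thesis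
    proof
      assume "e' = 0"
      then have "e = m * t"
        unfolding e'_def by (simp add: mult.commute)
      with t show ?thesis by blast
    next
      assume "degree e' < degree e"
      then obtain q where q: "poly_over S q" "e' = m * q"
        using less.hyps e' by blast
      then have "e = m * (q + t)"
        unfolding e'_def by (simp add: algebra_simps)
      with poly_over_add[OF S q(1) t] show ?thesis by blast
    qed
  qed
qed

definition adjoin :: "'a set \<Rightarrow> 'a \<Rightarrow> 'a set" where
  "adjoin S z = {poly g z | g. poly_over S g}"

context
  fixes S :: "'a set"
  assumes S: "K_subring S"
begin

lemma subset_adjoin: "S \<subseteq> adjoin S z"
proof
  fix a assume "a \<in> S"
  then have "poly_over S [:a:]" "poly [:a:] z = a"
    using poly_over_const[OF S] by simp_all
  then show "a \<in> adjoin S z"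
    unfolding adjoin_def by (metis (mono_tags) mem_Collect_eq)
qed

lemma mem_adjoin: "z \<in> adjoin S z"
proof -
  have "poly [:0, 1:] z = z"
    by simp
  with poly_over_X[OF S] show ?thesis
    unfolding adjoin_def by (metis (mono_tags) mem_Collect_eq)
qed

lemma K_subring_adjoin: "K_subring (adjoin S z)"
  unfolding K_subring_def
proof (intro conjI ballI)
  show "range emb \<subseteq> adjoin S z"
    using subset_adjoin K_subring_emb[OF S] by blast
  fix a b assume "a \<in> adjoin S z" "b \<in> adjoin S z"
  then obtain g k where g: "poly_over S g" "a = poly g z" and k: "poly_over S k" "b = poly k z"
    unfolding adjoin_def by blast
  show "a + b \<in> adjoin S z"
    using poly_over_add[OF S g(1) k(1)] g k unfolding adjoin_def
    by (metis (mono_tags) mem_Collect_eq poly_add)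
  show "a * b \<in> adjoin S z"
    using poly_over_mult[OF S g(1) k(1)] g k unfolding adjoin_def
    by (metis (mono_tags) mem_Collect_eq poly_mult)
next
  fix a assume "a \<in> adjoin S z"
  then obtain g where g: "poly_over S g" "a = poly g z"
    unfolding adjoin_def by blast
  show "- a \<in> adjoin S z"
    using poly_over_uminus[OF S g(1)] g unfolding adjoin_def
    by (metis (mono_tags) mem_Collect_eq poly_minus)
qed

lemma min_poly_over_map_poly_root:
  assumes f: "K_hom_on S f" and m: "min_poly_over S z m" and w: "poly (map_poly f m) w = 0"
    and g: "poly_over S g" and k: "poly_over S k" and eq: "poly g z = poly k z"
  shows "poly (map_poly f g) w = poly (map_poly f k) w"
proof -
  have m_over: "poly_over S m"
    using m unfolding min_poly_over_def by blast
  obtain q where q: "poly_over S q" "g - k = m * q"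
    using min_poly_over_dvd[OF S m poly_over_diff[OF S g k]] eq by auto
  have "map_poly f g - map_poly f k = map_poly f m * map_poly f q"
    using map_poly_K_hom_on_diff[OF S f g k] map_poly_K_hom_on_mult[OF S f m_over q(1)] q(2)
    by simp
  with w show ?thesis
    by (metis eq_iff_diff_eq_0 mult_eq_0_iff poly_diff poly_mult)
qed

lemma K_hom_on_adjoin:
  assumes f: "K_hom_on S f" and m: "min_poly_over S z m" and w: "poly (map_poly f m) w = 0"
  obtains f' where "K_hom_on (adjoin S z) f'" "\<forall>a\<in>S. f' a = f a" "f' z = w"
proof -
  define f' where "f' a = poly (map_poly f (SOME g. poly_over S g \<and> a = poly g z)) w" for a
  have f'_poly: "f' (poly g z) = poly (map_poly f g) w" if g: "poly_over S g" for g
  proof -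
    have "\<exists>g'. poly_over S g' \<and> poly g z = poly g' z"
      using g by blast
    from someI_ex[OF this] show ?thesis
      unfolding f'_def using min_poly_over_map_poly_root[OF f m w] g by metis
  qed
  have f'_ext: "\<forall>a\<in>S. f' a = f a"
    using f'_poly[OF poly_over_const[OF S]] by (simp add: K_hom_on_0[OF S f] map_poly_pCons)
  have "K_hom_on (adjoin S z) f'"
    unfolding K_hom_on_def
  proof (intro conjI allI ballI)
    show "f' (emb c) = emb c" for c
      using f'_ext K_subring_emb[OF S] K_hom_on_emb[OF S f] by metis
    fix a b assume "a \<in> adjoin S z" "b \<in> adjoin S z"
    then obtain g k where g: "poly_over S g" "a = poly g z" and k: "poly_over S k" "b = poly k z"
      unfolding adjoin_def by blast
    show "f' (a + b) = f' a + f' b"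
      using f'_poly[OF poly_over_add[OF S g(1) k(1)]] f'_poly[OF g(1)] f'_poly[OF k(1)] g k
      by (simp add: map_poly_K_hom_on_add[OF S f g(1) k(1)])
    show "f' (a * b) = f' a * f' b"
      using f'_poly[OF poly_over_mult[OF S g(1) k(1)]] f'_poly[OF g(1)] f'_poly[OF k(1)] g k
      by (simp add: map_poly_K_hom_on_mult[OF S f g(1) k(1)])
  qed
  moreover have "f' z = w"
    using f'_poly[OF poly_over_X[OF S]]
    by (simp add: map_poly_pCons K_hom_on_0[OF S f] K_hom_on_1[OF S f])
  ultimately show ?thesis
    using f'_ext that by blast
qed

end

text \<open>Partial K-homomorphisms are handled through their graphs, which are ordered by inclusion
  for Zorn's lemma: the closure conditions below involve at most two pairs at a time and
  therefore pass to unions of chains.\<close>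
definition K_hom_graph :: "('a \<times> 'a) set \<Rightarrow> bool" where
  "K_hom_graph G \<longleftrightarrow>
     (\<forall>a b c d. (a, b) \<in> G \<longrightarrow> (c, d) \<in> G \<longrightarrow> (a + c, b + d) \<in> G \<and> (a * c, b * d) \<in> G) \<and>
     (\<forall>a b. (a, b) \<in> G \<longrightarrow> (- a, - b) \<in> G) \<and> (\<forall>c. (emb c, emb c) \<in> G) \<and>
     (\<forall>a b b'. (a, b) \<in> G \<longrightarrow> (a, b') \<in> G \<longrightarrow> b = b')"

definition graph_on :: "'a set \<Rightarrow> ('a \<Rightarrow> 'a) \<Rightarrow> ('a \<times> 'a) set" where
  "graph_on S f = {(a, f a) | a. a \<in> S}"

definition graph_fun :: "('a \<times> 'a) set \<Rightarrow> 'a \<Rightarrow> 'a" where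
  "graph_fun G a = (THE b. (a, b) \<in> G)"

lemma K_hom_graph_graph_on:
  assumes S: "K_subring S" and f: "K_hom_on S f"
  shows "K_hom_graph (graph_on S f)"
  unfolding K_hom_graph_def graph_on_def
  using K_subring_add[OF S] K_subring_mult[OF S] K_subring_uminus[OF S] K_subring_emb[OF S]
    K_hom_on_add[OF S f] K_hom_on_mult[OF S f] K_hom_on_uminus[OF S f] K_hom_on_emb[OF S f]
  by auto

lemma graph_fun_eq: "K_hom_graph G \<Longrightarrow> (a, b) \<in> G \<Longrightarrow> graph_fun G a = b"
  unfolding graph_fun_def K_hom_graph_def by (intro the_equality) blast+

lemma graph_on_graph_fun: "K_hom_graph G \<Longrightarrow> graph_on (Domain G) (graph_fun G) = G"
  unfolding graph_on_def using graph_fun_eq by fastforce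

lemma K_subring_Domain: "K_hom_graph G \<Longrightarrow> K_subring (Domain G)"
  unfolding K_subring_def K_hom_graph_def by (auto simp: Domain_iff) blast+

lemma K_hom_on_graph_fun:
  assumes G: "K_hom_graph G"
  shows "K_hom_on (Domain G) (graph_fun G)"
  unfolding K_hom_on_def
proof (intro conjI allI ballI)
  show "graph_fun G (emb c) = emb c" for c
    using G graph_fun_eq unfolding K_hom_graph_def by blast
  fix a b assume "a \<in> Domain G" "b \<in> Domain G"
  then obtain a' b' where ab: "(a, a') \<in> G" "(b, b') \<in> G"
    by blast
  then have "(a + b, a' + b') \<in> G" "(a * b, a' * b') \<in> G"
    using G unfolding K_hom_graph_def by blast+
  with ab show "graph_fun G (a + b) = graph_fun G a + graph_fun G b"
    "graph_fun G (a * b) = graph_fun G a * graph_fun G b"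
    using graph_fun_eq[OF G] by simp_all
qed

lemma K_hom_graph_chain_Union:
  assumes C: "C \<in> chains {G. K_hom_graph G}" and ne: "C \<noteq> {}"
  shows "K_hom_graph (\<Union>C)"
proof -
  have G: "K_hom_graph G" if "G \<in> C" for G
    using C that unfolding chains_def by blast
  have common: "\<exists>G\<in>C. p \<in> G \<and> q \<in> G" if "p \<in> \<Union>C" "q \<in> \<Union>C" for p q
    using that chainsD[OF C] by blast
  show ?thesis
    unfolding K_hom_graph_def
  proof (intro conjI allI impI)
    fix a b c d assume "(a, b) \<in> \<Union>C" "(c, d) \<in> \<Union>C"
    with common obtain G where "G \<in> C" "(a, b) \<in> G" "(c, d) \<in> G"
      by blast
    then show "(a + c, b + d) \<in> \<Union>C" "(a * c, b * d) \<in> \<Union>C"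
      using G unfolding K_hom_graph_def by blast+
  next
    fix a b assume "(a, b) \<in> \<Union>C"
    then show "(- a, - b) \<in> \<Union>C"
      using G unfolding K_hom_graph_def by blast
  next
    show "(emb c, emb c) \<in> \<Union>C" for c
      using ne G unfolding K_hom_graph_def by blast
  next
    fix a b b' assume "(a, b) \<in> \<Union>C" "(a, b') \<in> \<Union>C"
    with common obtain G where "G \<in> C" "(a, b) \<in> G" "(a, b') \<in> G"
      by blast
    then show "b = b'"
      using G unfolding K_hom_graph_def by blast
  qed
qed

lemma K_hom_graph_maximal_imp_total:
  assumes G: "K_hom_graph M" and max: "\<And>G. K_hom_graph G \<Longrightarrow> M \<subseteq> G \<Longrightarrow> G = M"
  shows "Domain M = UNIV"
proof (rule ccontr)
  note D = K_subring_Domain[OF G] and g = K_hom_on_graph_fun[OF G]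
  assume "Domain M \<noteq> UNIV"
  then obtain z where z: "z \<notin> Domain M"
    by blast
  obtain m where m: "min_poly_over (Domain M) z m"
    using min_poly_over_exists[OF D] by blast
  then have "coeff (map_poly (graph_fun M) m) (degree m) = 1"
    by (simp add: min_poly_over_def coeff_map_poly K_hom_on_0[OF D g] K_hom_on_1[OF D g])
  then have "degree m \<le> degree (map_poly (graph_fun M) m)"
    by (intro le_degree) simp
  then have "degree (map_poly (graph_fun M) m) > 0"
    using min_poly_over_degree_pos[OF m] by linarith
  then obtain w where w: "poly (map_poly (graph_fun M) m) w = 0"
    using algebraically_closed by blast
  obtain f' where f': "K_hom_on (adjoin (Domain M) z) f'" "\<forall>a\<in>Domain M. f' a = graph_fun M a"
    by (rule K_hom_on_adjoin[OF D g m w])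
  have "M \<subseteq> graph_on (adjoin (Domain M) z) f'"
    using subset_adjoin[OF D] f'(2) graph_on_graph_fun[OF G] unfolding graph_on_def by force
  then have "graph_on (adjoin (Domain M) z) f' = M"
    using max K_hom_graph_graph_on[OF K_subring_adjoin[OF D] f'(1)] by blast
  with z mem_adjoin[OF D] show False
    unfolding graph_on_def by blast
qed

lemma K_hom_on_extends_to_field:
  assumes S: "K_subring S" and f: "K_hom_on S f"
  obtains \<sigma> where "K_hom_on UNIV \<sigma>" "\<forall>a\<in>S. \<sigma> a = f a"
proof -
  define A where "A = {G. K_hom_graph G \<and> graph_on S f \<subseteq> G}"
  have "\<exists>U\<in>A. \<forall>G\<in>C. G \<subseteq> U" if C: "C \<in> chains A" for C
  proof (cases "C = {}")
    case True
    then show ?thesis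
      using K_hom_graph_graph_on[OF S f] unfolding A_def by blast
  next
    case False
    have CA: "C \<subseteq> A"
      using C unfolding chains_def by blast
    then have "C \<in> chains {G. K_hom_graph G}"
      using C unfolding A_def chains_def chain_subset_def by blast
    then have "K_hom_graph (\<Union>C)"
      using False by (rule K_hom_graph_chain_Union)
    moreover have "graph_on S f \<subseteq> \<Union>C"
      using CA False unfolding A_def by blast
    ultimately show ?thesis
      unfolding A_def by blast
  qed
  then obtain M where M: "M \<in> A" and M_max: "\<forall>G\<in>A. M \<subseteq> G \<longrightarrow> G = M"
    using Zorn_Lemma2[of A] by blast
  then have G: "K_hom_graph M"
    unfolding A_def by blast
  have "Domain M = UNIV"
    by (rule K_hom_graph_maximal_imp_total[OF G]) (use M M_max in \<open>auto simp: A_def\<close>)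
  moreover have "\<forall>a\<in>S. graph_fun M a = f a"
    using M graph_fun_eq[OF G] unfolding A_def graph_on_def by blast
  ultimately show ?thesis
    using K_hom_on_graph_fun[OF G] by (intro that) simp_all
qed

subsection \<open>The fixed field of the Galois group\<close>

lemma K_subring_UNIV: "K_subring UNIV"
  unfolding K_subring_def by blast

lemma K_subring_K: "K_subring (range emb)"
  unfolding K_subring_def by (auto simp flip: emb.hom_add emb.hom_mult emb.hom_uminus)

lemma poly_over_K_pderiv: "poly_over (range emb) p \<Longrightarrow> poly_over (range emb) (pderiv p)"
  unfolding poly_over_def
  by (metis coeff_pderiv K_subring_mult[OF K_subring_K] emb.hom_of_nat rangeI)

lemma K_hom_on_id: "K_hom_on S id"
  unfolding K_hom_on_def by simp

lemma is_field_hom_if_K_hom_on_UNIV: "K_hom_on UNIV \<sigma> \<Longrightarrow> is_field_hom \<sigma>"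
  by (simp add: is_field_hom_def K_hom_on_1[OF K_subring_UNIV] K_hom_on_add[OF K_subring_UNIV]
      K_hom_on_mult[OF K_subring_UNIV])

text \<open>An injective K-endomorphism permutes the finitely many roots in the algebraic closure
  of a nonzero polynomial over K.\<close>
lemma K_hom_on_UNIV_surj:
  assumes \<sigma>: "K_hom_on UNIV \<sigma>"
  shows "surj \<sigma>"
proof -
  interpret \<sigma>: field_hom \<sigma>
    using \<sigma> by (intro field_hom_if_is_field_hom is_field_hom_if_K_hom_on_UNIV)
  have "b \<in> range \<sigma>" for b
  proof -
    obtain p where p: "p \<noteq> 0" "poly (map_poly emb p) b = 0"
      using algebraic_over_K by blast
    define P where "P = map_poly emb p"
    define R where "R = {t. poly P t = 0}"
    have "finite R"
      unfolding R_def P_def using p(1) by (simp add: poly_roots_finite)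
    moreover have "map_poly \<sigma> P = P"
      unfolding P_def by (rule poly_eqI) (simp add: coeff_map_poly K_hom_on_emb[OF K_subring_UNIV \<sigma>])
    then have "poly P (\<sigma> t) = \<sigma> (poly P t)" for t
      using K_hom_on_poly[OF K_subring_UNIV \<sigma>, of P t] poly_over_map_emb[OF K_subring_UNIV]
      unfolding P_def by simp
    then have "\<sigma> ` R \<subseteq> R"
      unfolding R_def by auto
    moreover have "inj_on \<sigma> R"
      using \<sigma>.inj_f by (rule inj_on_subset) simp
    ultimately have "\<sigma> ` R = R"
      by (rule endo_inj_surj)
    moreover have "b \<in> R"
      unfolding R_def P_def using p by simp
    ultimately show ?thesis
      by blast
  qed
  then show ?thesis
    by blast
qed

lemma K_hom_on_UNIV_in_galois_group:
  assumes \<sigma>: "K_hom_on UNIV \<sigma>"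
  shows "\<sigma> \<in> galois_group emb"
proof -
  have "is_field_hom \<sigma>"
    using \<sigma> by (rule is_field_hom_if_K_hom_on_UNIV)
  then interpret \<sigma>: field_hom \<sigma>
    by (rule field_hom_if_is_field_hom)
  show ?thesis
    using \<open>is_field_hom \<sigma>\<close> \<sigma>.inj_f K_hom_on_UNIV_surj[OF \<sigma>] K_hom_on_emb[OF K_subring_UNIV \<sigma>]
    unfolding galois_group_def bij_def by blast
qed

text \<open>In characteristic 0 the minimal polynomial of an element outside K has a second root:
  a double root would also be a root of the derivative, which is a nonzero polynomial over K of
  smaller degree.\<close>
lemma min_poly_over_K_other_root:
  assumes m: "min_poly_over (range emb) x m" and x: "x \<notin> range emb"
  shows "\<exists>y. poly m y = 0 \<and> y \<noteq> x"
proof (rule ccontr)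
  assume single_root: "\<not> (\<exists>y. poly m y = 0 \<and> y \<noteq> x)"
  have m_over: "poly_over (range emb) m" and monic: "lead_coeff m = 1" and root: "poly m x = 0"
    and minimal: "\<And>r. poly_over (range emb) r \<Longrightarrow> r \<noteq> 0 \<Longrightarrow> poly r x = 0 \<Longrightarrow> degree m \<le> degree r"
    using m unfolding min_poly_over_def by blast+
  have "degree m \<noteq> 1"
  proof
    assume "degree m = 1"
    then have "x = - coeff m 0"
      using root monic by (simp add: poly_altdef eq_neg_iff_add_eq_0 add.commute)
    then show False
      using x m_over K_subring_uminus[OF K_subring_K] unfolding poly_over_def by metis
  qed
  then have deg: "degree m \<ge> 2"
    using min_poly_over_degree_pos[OF m] by linarith
  define L where "L = [:- x, 1:]"
  have L: "L \<noteq> 0" "degree L = 1" "poly L x = 0"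
    unfolding L_def by simp_all
  obtain q where q: "m = L * q"
    using root unfolding L_def by (metis dvdE poly_eq_0_iff_dvd)
  with monic have "q \<noteq> 0"
    by auto
  with q L deg have "degree q > 0"
    by (simp add: degree_mult_eq)
  then obtain t where "poly q t = 0"
    using algebraically_closed by blast
  with q single_root have "poly q x = 0"
    by (metis mult_eq_0_iff poly_mult)
  then obtain q2 where "q = L * q2"
    unfolding L_def by (metis dvdE poly_eq_0_iff_dvd)
  with q L have pderiv_root: "poly (pderiv m) x = 0"
    by (simp add: pderiv_mult)
  have "poly_over (range emb) (pderiv m)"
    using poly_over_K_pderiv[OF m_over] .
  moreover have "pderiv m \<noteq> 0"
    using pderiv_eq_0_imp_degree_0 deg by fastforce
  moreover have "degree (pderiv m) < degree m"
    using deg by (intro le_less_trans[OF degree_le[of "degree m - 1"]]) (auto simp: coeff_pderiv coeff_eq_0)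
  ultimately show False
    using minimal pderiv_root by fastforce
qed

lemma fixed_field_of_galois_group:
  assumes "\<forall>\<sigma>\<in>galois_group emb. \<sigma> x = x"
  shows "x \<in> range emb"
proof (rule ccontr)
  assume x: "x \<notin> range emb"
  obtain m where m: "min_poly_over (range emb) x m"
    using min_poly_over_exists[OF K_subring_K] by blast
  obtain y where y: "poly m y = 0" "y \<noteq> x"
    using min_poly_over_K_other_root[OF m x] by blast
  obtain f' where f': "K_hom_on (adjoin (range emb) x) f'" "f' x = y"
    using K_hom_on_adjoin[OF K_subring_K K_hom_on_id m, of y] y(1) by (metis map_poly_id)
  obtain \<sigma> where "K_hom_on UNIV \<sigma>" "\<forall>a\<in>adjoin (range emb) x. \<sigma> a = f' a"
    using K_hom_on_extends_to_field[OF K_subring_adjoin[OF K_subring_K] f'(1)] by blast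
  with f'(2) y(2) assms mem_adjoin[OF K_subring_K] show False
    using K_hom_on_UNIV_in_galois_group by metis
qed

end

lemma mat_mult_index_lessThan:
  "A \<in> carrier_mat n n \<Longrightarrow> B \<in> carrier_mat n n \<Longrightarrow> i < n \<Longrightarrow> j < n \<Longrightarrow>
    (A * B) $$ (i, j) = (\<Sum>k<n. A $$ (i, k) * B $$ (k, j))"
  by (simp add: scalar_prod_def atLeast0LessThan)

lemma invertible_mat_iff_Units:
  assumes A: "A \<in> carrier_mat n n"
  shows "invertible_mat A \<longleftrightarrow> A \<in> Units (ring_mat TYPE('a::semiring_1) n b)"
proof
  assume "invertible_mat A"
  then obtain B where B: "A * B = 1\<^sub>m n" "B * A = 1\<^sub>m (dim_row B)"
    using A unfolding invertible_mat_def inverts_mat_def by auto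
  then have "B \<in> carrier_mat n n"
    using A by (metis carrier_matI index_mult_mat(3) index_one_mat(3) carrier_matD(2))
  with A B show "A \<in> Units (ring_mat TYPE('a) n b)"
    unfolding Units_def by (auto simp: ring_mat_simps)
next
  assume "A \<in> Units (ring_mat TYPE('a) n b)"
  with A show "invertible_mat A"
    unfolding Units_def invertible_mat_def inverts_mat_def by (auto simp: ring_mat_simps)
qed

lemma invertible_mat_iff_det_nonzero:
  fixes A :: "'a::field mat"
  assumes "A \<in> carrier_mat n n"
  shows "invertible_mat A \<longleftrightarrow> det A \<noteq> 0"
proof
  assume "invertible_mat A"
  then have "A \<in> Units (ring_mat TYPE('a) n ())"
    using invertible_mat_iff_Units[OF assms, where b = "()"] by simp
  then show "det A \<noteq> 0"
    by (rule unit_imp_det_non_zero)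
next
  assume "det A \<noteq> 0"
  then have "A \<in> Units (ring_mat TYPE('a) n ())"
    by (rule det_non_zero_imp_unit[OF assms])
  then show "invertible_mat A"
    using invertible_mat_iff_Units[OF assms, where b = "()"] by simp
qed

lemma minv_mat:
  fixes A :: "'a::field mat"
  assumes A: "A \<in> carrier_mat n n" and inv: "invertible_mat A"
  shows "minv A \<in> carrier_mat n n" "A * minv A = 1\<^sub>m n" "minv A * A = 1\<^sub>m n"
proof -
  have "A \<in> Units (ring_mat TYPE('a) n ())"
    using inv invertible_mat_iff_Units[OF A, where b = "()"] by simp
  then have "mat_inverse A \<noteq> None"
    using mat_inverse(1)[OF A, where b = "()"] by auto
  then obtain B where "mat_inverse A = Some B"
    by blast
  from mat_inverse(2)[OF A this] this show
    "minv A \<in> carrier_mat n n" "A * minv A = 1\<^sub>m n" "minv A * A = 1\<^sub>m n"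
    unfolding minv_def by simp_all
qed

lemma invertible_mat_row_nonzero:
  fixes A :: "'a::field mat"
  assumes A: "A \<in> carrier_mat n n" "invertible_mat A" and i: "i < n"
  shows "\<exists>k<n. A $$ (i, k) \<noteq> 0"
proof -
  have "(\<Sum>k<n. A $$ (i, k) * minv A $$ (k, i)) = 1"
    using mat_mult_index_lessThan[OF A(1) minv_mat(1)[OF A] i i] minv_mat(2)[OF A] i by simp
  then show ?thesis
    by (metis (no_types, lifting) lessThan_iff mult_zero_left sum.neutral zero_neq_one)
qed

lemma invertible_mat_col_nonzero:
  fixes A :: "'a::field mat"
  assumes A: "A \<in> carrier_mat n n" "invertible_mat A" and j: "j < n"
  shows "\<exists>k<n. A $$ (k, j) \<noteq> 0"
proof -
  have "(\<Sum>k<n. minv A $$ (j, k) * A $$ (k, j)) = 1"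
    using mat_mult_index_lessThan[OF minv_mat(1)[OF A] A(1) j j] minv_mat(3)[OF A] j by simp
  then show ?thesis
    by (metis (no_types, lifting) lessThan_iff mult_zero_right sum.neutral zero_neq_one)
qed

lemma dim_mat_diag [simp]: "dim_row (mat_diag n x) = n" "dim_col (mat_diag n x) = n"
  unfolding mat_diag_def by simp_all

lemma mat_diag_index: "i < n \<Longrightarrow> j < n \<Longrightarrow> mat_diag n x $$ (i, j) = (if i = j then x j else 0)"
  unfolding mat_diag_def by simp

lemma diagonal_mat_eq_mat_diag:
  assumes "A \<in> carrier_mat n n" "diagonal_mat A"
  shows "A = mat_diag n (\<lambda>j. A $$ (j, j))"
  using assms by (intro eq_matI) (auto simp: mat_diag_index diagonal_mat_def)

lemma mat_diag_mult_inverse: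
  fixes x :: "nat \<Rightarrow> 'a::field"
  assumes "\<And>j. j < n \<Longrightarrow> x j \<noteq> 0"
  shows "mat_diag n x * mat_diag n (\<lambda>j. inverse (x j)) = 1\<^sub>m n"
  using assms by (intro eq_matI) (auto simp: mat_diag_index mat_diag_mult_right)

lemma
  fixes x :: "nat \<Rightarrow> 'a::field"
  assumes x: "\<And>j. j < n \<Longrightarrow> x j \<noteq> 0"
  shows invertible_mat_diag: "invertible_mat (mat_diag n x)"
    and minv_mat_diag: "minv (mat_diag n x) = mat_diag n (\<lambda>j. inverse (x j))"
proof -
  have D: "mat_diag n x \<in> carrier_mat n n" "mat_diag n (\<lambda>j. inverse (x j)) \<in> carrier_mat n n"
    by simp_all
  have right: "mat_diag n x * mat_diag n (\<lambda>j. inverse (x j)) = 1\<^sub>m n"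
    by (rule mat_diag_mult_inverse[OF x])
  moreover have "mat_diag n (\<lambda>j. inverse (x j)) * mat_diag n x = 1\<^sub>m n"
    using mat_diag_mult_inverse[of n "\<lambda>j. inverse (x j)"] x by (simp del: mat_diag_diag)
  ultimately show inv: "invertible_mat (mat_diag n x)"
    unfolding invertible_mat_def inverts_mat_def square_mat.simps
    by (auto simp del: mat_diag_diag intro!: exI[of _ "mat_diag n (\<lambda>j. inverse (x j))"])
  have "minv (mat_diag n x) = minv (mat_diag n x) * (mat_diag n x * mat_diag n (\<lambda>j. inverse (x j)))"
    using minv_mat(1)[OF D(1) inv] by (simp add: right del: mat_diag_diag)
  also have "\<dots> = (minv (mat_diag n x) * mat_diag n x) * mat_diag n (\<lambda>j. inverse (x j))"
    using minv_mat(1)[OF D(1) inv] D by (intro assoc_mult_mat[symmetric])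
  also have "\<dots> = mat_diag n (\<lambda>j. inverse (x j))"
    using minv_mat(3)[OF D(1) inv] by (simp del: mat_diag_diag)
  finally show "minv (mat_diag n x) = mat_diag n (\<lambda>j. inverse (x j))" .
qed

section \<open>The stabiliser of the Drinfeld-Jimbo r-matrix\<close>

lemma r_DJ_as_deltas:
  "(r_DJ n a b c d :: 'a::field) = (if a = d \<and> c = b then (if a < b then 1 else 0) else 0)
     + 1/2 * (if a = b \<and> c = d then (if a = c then 1 else 0) - 1 / of_nat n else 0)"
proof -
  have "(if a < b \<and> c = b \<and> d = a then 1 else 0) = (if a = d \<and> c = b then if a < b then 1 else (0::'a) else 0)"
    by auto
  moreover have "(if a = b \<and> c = d \<and> a = c then 1 else 0) - (if a = b \<and> c = d then 1 / of_nat n else 0) =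
      (if a = b \<and> c = d then (if a = c then 1 else 0) - 1 / of_nat n else (0::'a))"
    by auto
  ultimately show ?thesis
    unfolding r_DJ_def by simp
qed

lemma r_DJ_contract_left:
  fixes g :: "nat \<Rightarrow> nat \<Rightarrow> 'a::field"
  assumes "m < n" "p < n"
  shows "(\<Sum>i<n. \<Sum>k<n. g i k * r_DJ n i m k p) =
     (if p < m then g p m else 0) + 1/2 * ((if m = p then g m p else 0) - g m p / of_nat n)"
proof -
  have "(\<Sum>i<n. \<Sum>k<n. g i k * r_DJ n i m k p) =
      (\<Sum>i<n. \<Sum>k<n. g i k * (if i = p \<and> k = m then if i < m then 1 else 0 else 0)) +
      1/2 * (\<Sum>i<n. \<Sum>k<n. g i k * (if i = m \<and> k = p then (if i = k then 1 else 0) - 1 / of_nat n else 0))"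
    unfolding r_DJ_as_deltas distrib_left sum.distrib sum_distrib_left mult.left_commute[of _ "1/2"] ..
  also have "\<dots> = (if p < m then g p m else 0) + 1/2 * ((if m = p then g m p else 0) - g m p / of_nat n)"
    unfolding sum_sum_delta[OF assms(2,1)] sum_sum_delta[OF assms] by (simp add: right_diff_distrib)
  finally show ?thesis .
qed

lemma r_DJ_contract_right:
  fixes h :: "nat \<Rightarrow> nat \<Rightarrow> 'a::field"
  assumes "a < n" "c < n"
  shows "(\<Sum>b<n. \<Sum>d<n. r_DJ n a b c d * h b d) =
     (if a < c then h c a else 0) + 1/2 * ((if a = c then h a c else 0) - h a c / of_nat n)"
proof -
  have "(r_DJ n a b c d :: 'a) = (if b = c \<and> d = a then if a < b then 1 else 0 else 0)
      + 1/2 * (if b = a \<and> d = c then (if a = c then 1 else 0) - 1 / of_nat n else 0)" for b d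
    unfolding r_DJ_as_deltas by (intro arg_cong2[where f = "(+)"] arg_cong2[where f = "(*)"] refl) auto
  then have "r_DJ n a b c d * h b d = h b d * (if b = c \<and> d = a then if a < b then 1 else 0 else 0)
      + 1/2 * (h b d * (if b = a \<and> d = c then (if a = c then 1 else 0) - 1 / of_nat n else 0))" for b d
    by (simp only: distrib_left distrib_right ac_simps)
  then have "(\<Sum>b<n. \<Sum>d<n. r_DJ n a b c d * h b d) =
      (\<Sum>b<n. \<Sum>d<n. h b d * (if b = c \<and> d = a then if a < b then 1 else 0 else 0)) +
      1/2 * (\<Sum>b<n. \<Sum>d<n. h b d * (if b = a \<and> d = c then (if a = c then 1 else 0) - 1 / of_nat n else 0))"
    by (simp only: sum.distrib sum_distrib_left)
  also have "\<dots> = (if a < c then h c a else 0) + 1/2 * ((if a = c then h a c else 0) - h a c / of_nat n)"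
    unfolding sum_sum_delta[OF assms(2,1)] sum_sum_delta[OF assms] by (simp add: right_diff_distrib)
  finally show ?thesis .
qed

text \<open>Invariance of r under Ad_Y \<otimes> Ad_Y means that Y \<otimes> Y commutes with r, viewed as an
  endomorphism of the tensor square.\<close>
lemma Ad_tensor_fixed_imp_commute:
  fixes Y :: "'a::field mat"
  assumes Y: "Y \<in> carrier_mat n n" "invertible_mat Y"
    and fixed: "\<And>b d. b < n \<Longrightarrow> d < n \<Longrightarrow> Ad_tensor n Y r a b c d = r a b c d"
    and mp: "m < n" "p < n"
  shows "(\<Sum>i<n. \<Sum>k<n. Y $$ (a, i) * Y $$ (c, k) * r i m k p) =
    (\<Sum>b<n. \<Sum>d<n. r a b c d * Y $$ (b, m) * Y $$ (d, p))"
proof -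
  define T where "T i j k l = Y $$ (a, i) * Y $$ (c, k) * r i j k l" for i j k l
  define P where "P j q = (\<Sum>b<n. minv Y $$ (j, b) * Y $$ (b, q))" for j q
  have P: "P j q = (if j = q then 1 else 0)" if "j < n" "q < n" for j q
    using mat_mult_index_lessThan[OF minv_mat(1)[OF Y] Y(1) that] minv_mat(3)[OF Y] that
    unfolding P_def by simp
  have "(\<Sum>b<n. \<Sum>d<n. r a b c d * Y $$ (b, m) * Y $$ (d, p)) =
      (\<Sum>b<n. \<Sum>d<n. \<Sum>i<n. \<Sum>j<n. \<Sum>k<n. \<Sum>l<n.
        T i j k l * ((minv Y $$ (j, b) * Y $$ (b, m)) * (minv Y $$ (l, d) * Y $$ (d, p))))"
    by (intro sum.cong refl)
      (simp add: fixed[symmetric] Ad_tensor_def T_def sum_distrib_left sum_distrib_right mult_ac)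
  also have "\<dots> = (\<Sum>i<n. \<Sum>k<n. \<Sum>j<n. \<Sum>l<n. \<Sum>b<n. \<Sum>d<n.
        T i j k l * ((minv Y $$ (j, b) * Y $$ (b, m)) * (minv Y $$ (l, d) * Y $$ (d, p))))"
    by (rule sum_nested_swap)
  also have "\<dots> = (\<Sum>i<n. \<Sum>k<n. \<Sum>j<n. \<Sum>l<n. T i j k l * (P j m * P l p))"
    unfolding P_def sum_product unfolding sum_distrib_left ..
  also have "\<dots> = (\<Sum>i<n. \<Sum>k<n. \<Sum>j<n. \<Sum>l<n. T i j k l * (if j = m \<and> l = p then 1 else 0))"
    using mp by (intro sum.cong refl) (simp add: P)
  also have "\<dots> = (\<Sum>i<n. \<Sum>k<n. T i m k p)"
    unfolding sum_sum_delta[OF mp] mult_1_right ..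
  finally show ?thesis
    unfolding T_def ..
qed

lemma centralizer_r_DJ_entry_identity:
  fixes Y :: "'a::field mat"
  assumes Y: "Y \<in> centralizer n (r_DJ n)" and a: "a < n" and c: "c < n" and m: "m < n" and p: "p < n"
  shows "(if p < m then Y $$ (a, p) * Y $$ (c, m) else 0) + 1/2 * (if m = p then Y $$ (a, m) * Y $$ (c, p) else 0)
       = (if a < c then Y $$ (c, m) * Y $$ (a, p) else 0) + 1/2 * (if a = c then Y $$ (a, m) * Y $$ (c, p) else 0)"
proof -
  have Y': "Y \<in> carrier_mat n n" "invertible_mat Y"
    and fixed: "\<And>b d. b < n \<Longrightarrow> d < n \<Longrightarrow> Ad_tensor n Y (r_DJ n) a b c d = r_DJ n a b c d"
    using Y a c unfolding centralizer_def by auto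
  have "(\<Sum>i<n. \<Sum>k<n. (Y $$ (a, i) * Y $$ (c, k)) * r_DJ n i m k p) =
      (\<Sum>b<n. \<Sum>d<n. r_DJ n a b c d * (Y $$ (b, m) * Y $$ (d, p)))"
    using Ad_tensor_fixed_imp_commute[OF Y' fixed m p] by (simp add: mult.assoc)
  then show ?thesis
    unfolding r_DJ_contract_left[OF m p] r_DJ_contract_right[OF a c]
    by (rule add_mult_diff_cancel)
qed

lemma
  fixes Y :: "'a::field mat"
  assumes Y: "Y \<in> centralizer n (r_DJ n)" and two: "(2::'a) \<noteq> 0"
  shows centralizer_r_DJ_column_products:
      "a < n \<Longrightarrow> c < n \<Longrightarrow> m < n \<Longrightarrow> a \<noteq> c \<Longrightarrow> Y $$ (a, m) * Y $$ (c, m) = 0"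
    and centralizer_r_DJ_row_products:
      "a < n \<Longrightarrow> m < n \<Longrightarrow> p < n \<Longrightarrow> m \<noteq> p \<Longrightarrow> Y $$ (a, m) * Y $$ (a, p) = 0"
    and centralizer_r_DJ_crossing_products:
      "a < c \<Longrightarrow> c < n \<Longrightarrow> m < p \<Longrightarrow> p < n \<Longrightarrow> Y $$ (c, m) * Y $$ (a, p) = 0"
proof -
  show "Y $$ (a, m) * Y $$ (c, m) = 0" if "a < n" "c < n" "m < n" "a \<noteq> c"
  proof (rule half_eq_if_imp_zero[OF two])
    show "1/2 * (Y $$ (a, m) * Y $$ (c, m)) = (if a < c then Y $$ (a, m) * Y $$ (c, m) else 0)"
      using centralizer_r_DJ_entry_identity[OF Y that(1,2,3,3)] that(4)
      by (simp only: less_irrefl if_True if_False simp_thms add_0_left add_0_right mult_zero_right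
          mult.commute[of "Y $$ (c, m)"])
  qed
  show "Y $$ (a, m) * Y $$ (a, p) = 0" if "a < n" "m < n" "p < n" "m \<noteq> p"
  proof (rule half_eq_if_imp_zero[OF two])
    show "1/2 * (Y $$ (a, m) * Y $$ (a, p)) = (if p < m then Y $$ (a, m) * Y $$ (a, p) else 0)"
      using centralizer_r_DJ_entry_identity[OF Y that(1,1,2,3)] that(4)
      by (simp only: less_irrefl if_True if_False simp_thms add_0_left add_0_right mult_zero_right
          mult.commute[of "Y $$ (a, p)"])
  qed
  show "Y $$ (c, m) * Y $$ (a, p) = 0" if "a < c" "c < n" "m < p" "p < n"
  proof -
    have "a < n" "m < n"
      using that by simp_all
    moreover have "\<not> p < m" "m \<noteq> p" "a \<noteq> c"
      using that by auto
    ultimately show ?thesis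
      using centralizer_r_DJ_entry_identity[OF Y \<open>a < n\<close> \<open>c < n\<close> \<open>m < n\<close> \<open>p < n\<close>] that(1)
      by (simp only: if_True if_False simp_thms add_0_left add_0_right mult_zero_right)
  qed
qed

lemma centralizer_r_DJ_support_mono:
  fixes Y :: "'a::field mat"
  assumes Y: "Y \<in> centralizer n (r_DJ n)" and two: "(2::'a) \<noteq> 0"
    and ac: "a < c" "c < n" and mq: "m < n" "q < n"
    and nonzero: "Y $$ (a, m) \<noteq> 0" "Y $$ (c, q) \<noteq> 0"
  shows "m < q"
proof -
  have "Y $$ (a, m) * Y $$ (c, m) = 0"
    using centralizer_r_DJ_column_products[OF Y two _ ac(2) mq(1)] ac by simp
  with nonzero have "m \<noteq> q"
    by auto
  moreover have "\<not> q < m"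
  proof
    assume "q < m"
    then have "Y $$ (c, q) * Y $$ (a, m) = 0"
      using centralizer_r_DJ_crossing_products[OF Y two ac _ mq(1)] by blast
    with nonzero show False
      by simp
  qed
  ultimately show ?thesis
    by linarith
qed

text \<open>Choosing a nonzero entry Y a (\<pi> a) in each row, \<pi> is strictly monotone on {..<n}, hence
  the identity.\<close>
lemma centralizer_r_DJ_diagonal:
  fixes Y :: "'a::field mat"
  assumes Y: "Y \<in> centralizer n (r_DJ n)" and two: "(2::'a) \<noteq> 0"
  shows "diagonal_mat Y"
proof -
  have Y': "Y \<in> carrier_mat n n" "invertible_mat Y"
    using Y unfolding centralizer_def by auto
  have row: "\<forall>a. \<exists>k. a < n \<longrightarrow> k < n \<and> Y $$ (a, k) \<noteq> 0"
    using invertible_mat_row_nonzero[OF Y'] by blast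
  obtain \<pi> where \<pi>: "\<And>a. a < n \<Longrightarrow> \<pi> a < n \<and> Y $$ (a, \<pi> a) \<noteq> 0"
    using choice[OF row] by blast
  have "strict_mono_on {..<n} \<pi>"
  proof (rule strict_mono_onI)
    fix a c assume "a \<in> {..<n}" "c \<in> {..<n}" "a < c"
    then have "a < n" "c < n"
      by simp_all
    then show "\<pi> a < \<pi> c"
      using centralizer_r_DJ_support_mono[OF Y two \<open>a < c\<close> \<open>c < n\<close>] \<pi> by blast
  qed
  then have \<pi>_id: "\<pi> a = a" if "a < n" for a
    using strict_mono_on_lessThan_eq_self[of n \<pi> a] \<pi> that by blast
  show ?thesis
    unfolding diagonal_mat_def
  proof (intro allI impI)
    fix a b assume "a < dim_row Y" "b < dim_col Y" "a \<noteq> b"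
    with Y'(1) have a: "a < n" and b: "b < n" and "b \<noteq> a"
      by auto
    have "Y $$ (a, b) * Y $$ (a, a) = 0"
      by (rule centralizer_r_DJ_row_products[OF Y two a b a \<open>b \<noteq> a\<close>])
    moreover have "Y $$ (a, a) \<noteq> 0"
      using \<pi>[OF a] \<pi>_id[OF a] by simp
    ultimately show "Y $$ (a, b) = 0"
      by simp
  qed
qed

lemma Ad_tensor_mat_diag:
  fixes x :: "nat \<Rightarrow> 'a::field"
  assumes x: "\<And>j. j < n \<Longrightarrow> x j \<noteq> 0" and "a < n" "b < n" "c < n" "d < n"
  shows "Ad_tensor n (mat_diag n x) r a b c d = x a * inverse (x b) * x c * inverse (x d) * r a b c d"
proof -
  let ?D = "mat_diag n x" and ?M = "mat_diag n (\<lambda>j. inverse (x j))"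
  have "Ad_tensor n ?D r a b c d = (\<Sum>(i, j, k, l) \<in> {..<n} \<times> {..<n} \<times> {..<n} \<times> {..<n}.
      ?D $$ (a, i) * ?M $$ (j, b) * ?D $$ (c, k) * ?M $$ (l, d) * r i j k l)"
    unfolding Ad_tensor_def sum.cartesian_product by (simp only: minv_mat_diag[OF x])
  also have "\<dots> = (\<lambda>(i, j, k, l). ?D $$ (a, i) * ?M $$ (j, b) * ?D $$ (c, k) * ?M $$ (l, d) *
      r i j k l) (a, b, c, d)"
    using assms(2-) by (intro sum_eq_single_point) (auto simp: mat_diag_index split: if_splits)
  also have "\<dots> = x a * inverse (x b) * x c * inverse (x d) * r a b c d"
    using assms(2-) by (simp add: mat_diag_index)
  finally show ?thesis .
qed

lemma mat_diag_in_centralizer_r_DJ: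
  fixes x :: "nat \<Rightarrow> 'a::field"
  assumes x: "\<And>j. j < n \<Longrightarrow> x j \<noteq> 0"
  shows "mat_diag n x \<in> centralizer n (r_DJ n)"
proof -
  have factor: "x a * inverse (x b) * x c * inverse (x d) * r_DJ n a b c d = r_DJ n a b c d"
    if "a < n" "c < n" for a b c d
  proof (cases "(a = d \<and> c = b) \<or> (a = b \<and> c = d)")
    case True
    have "x a * inverse (x b) * x c * inverse (x d) = (x a * inverse (x a)) * (x c * inverse (x c))"
      using True by (elim disjE conjE) (simp_all only: ac_simps)
    also have "\<dots> = 1"
      using x[OF \<open>a < n\<close>] x[OF \<open>c < n\<close>] by simp
    finally show ?thesis
      by simp
  next
    case False
    then have "\<not> (a = d \<and> c = b)" "\<not> (a = b \<and> c = d)"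
      by auto
    then show ?thesis
      by (simp only: r_DJ_as_deltas if_False mult_zero_right add_0_left)
  qed
  have "Ad_tensor n (mat_diag n x) (r_DJ n) a b c d = r_DJ n a b c d"
    if "a < n" "b < n" "c < n" "d < n" for a b c d
    using factor[OF that(1,3)] by (simp only: Ad_tensor_mat_diag[OF x that, where r = "r_DJ n"])
  then show ?thesis
    unfolding centralizer_def using invertible_mat_diag[OF x] by auto
qed

section \<open>Cocycles\<close>

lemma GL_K_times_diagonal_decomposition:
  fixes X :: "'a::field mat" and emb :: "complex fls \<Rightarrow> 'a"
  assumes X: "X \<in> carrier_mat n n" "invertible_mat X"
    and ratio: "\<And>i j k. i < n \<Longrightarrow> j < n \<Longrightarrow> k < n \<Longrightarrow> X $$ (k, j) \<noteq> 0 \<Longrightarrow>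
      X $$ (i, j) / X $$ (k, j) \<in> range emb"
  obtains Q x where "Q \<in> GL_K emb n" "\<forall>j<n. x j \<noteq> 0" "X = Q * mat_diag n x"
proof -
  have col: "\<forall>j. \<exists>k. j < n \<longrightarrow> k < n \<and> X $$ (k, j) \<noteq> 0"
    using invertible_mat_col_nonzero[OF X] by blast
  obtain \<rho> where \<rho>: "\<And>j. j < n \<Longrightarrow> \<rho> j < n \<and> X $$ (\<rho> j, j) \<noteq> 0"
    using choice[OF col] by blast
  define x where "x j = X $$ (\<rho> j, j)" for j
  have x: "x j \<noteq> 0" if "j < n" for j
    using \<rho>[OF that] unfolding x_def by simp
  define Q where "Q = X * mat_diag n (\<lambda>j. inverse (x j))"
  have Q: "Q \<in> carrier_mat n n"
    unfolding Q_def using X(1) by simp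
  have "Q * mat_diag n x = X * (mat_diag n (\<lambda>j. inverse (x j)) * mat_diag n x)"
    unfolding Q_def using X(1) by (intro assoc_mult_mat) auto
  also have "\<dots> = X"
    using mat_diag_mult_inverse[of n "\<lambda>j. inverse (x j)"] x X(1) by (simp del: mat_diag_diag)
  finally have XQ: "X = Q * mat_diag n x" ..
  have "det X = det Q * det (mat_diag n x)"
    using det_mult[OF Q mat_diag_dim] XQ by simp
  then have "invertible_mat Q"
    using X Q by (simp add: invertible_mat_iff_det_nonzero)
  moreover have "Q $$ (i, j) \<in> range emb" if "i < n" "j < n" for i j
    using ratio[OF that \<rho>[OF that(2), THEN conjunct1]] \<rho>[OF that(2)] that X(1)
    unfolding Q_def x_def by (simp add: mat_diag_mult_right field_simps)
  ultimately have "Q \<in> GL_K emb n"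
    unfolding GL_K_def using Q by blast
  with x XQ show ?thesis
    using that by blast
qed

context algebraic_closure_of_K
begin

lemma two_neq_zero: "(2::'a) \<noteq> 0"
  by (metis emb.hom_0_iff emb.hom_numeral zero_neq_numeral)

lemma cocycle_column_scaling:
  assumes X: "is_cocycle emb n (r_DJ n) X" and \<sigma>: "\<sigma> \<in> galois_group emb" and ij: "i < n" "j < n"
  shows "\<sigma> (X $$ (i, j)) = X $$ (i, j) * (minv X * map_mat \<sigma> X) $$ (j, j)"
proof -
  define Y where "Y = minv X * map_mat \<sigma> X"
  have X': "X \<in> carrier_mat n n" "invertible_mat X" and Y: "Y \<in> centralizer n (r_DJ n)"
    using X \<sigma> unfolding is_cocycle_def Y_def by auto
  have "X * Y = (X * minv X) * map_mat \<sigma> X"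
    unfolding Y_def using minv_mat(1)[OF X'] X'(1) by (intro assoc_mult_mat[symmetric]) auto
  then have XY: "X * Y = map_mat \<sigma> X"
    using minv_mat(2)[OF X'] X'(1) by simp
  have "Y \<in> carrier_mat n n"
    using Y unfolding centralizer_def by blast
  then have "Y = mat_diag n (\<lambda>j. Y $$ (j, j))"
    using centralizer_r_DJ_diagonal[OF Y two_neq_zero] by (rule diagonal_mat_eq_mat_diag)
  then have "map_mat \<sigma> X = mat n n (\<lambda>(i, j). X $$ (i, j) * Y $$ (j, j))"
    using XY X'(1) mat_diag_mult_right[OF X'(1)] by metis
  with ij X'(1) show ?thesis
    unfolding Y_def by (metis (no_types, lifting) carrier_matD index_map_mat index_mat(1) case_prod_conv)
qed

lemma cocycle_column_ratio_in_K:
  assumes X: "is_cocycle emb n (r_DJ n) X" and i: "i < n" and j: "j < n" and k: "k < n"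
    and nz: "X $$ (k, j) \<noteq> 0"
  shows "X $$ (i, j) / X $$ (k, j) \<in> range emb"
proof (rule fixed_field_of_galois_group, intro ballI)
  fix \<sigma> assume \<sigma>: "\<sigma> \<in> galois_group emb"
  interpret \<sigma>: field_hom \<sigma>
    using galois_group_field_hom[OF \<sigma>] .
  define d where "d = (minv X * map_mat \<sigma> X) $$ (j, j)"
  have "X $$ (k, j) * d = \<sigma> (X $$ (k, j))"
    using cocycle_column_scaling[OF X \<sigma> k j] unfolding d_def by simp
  with nz have "X $$ (k, j) * d \<noteq> 0"
    by simp
  then show "\<sigma> (X $$ (i, j) / X $$ (k, j)) = X $$ (i, j) / X $$ (k, j)"
    using cocycle_column_scaling[OF X \<sigma> i j] cocycle_column_scaling[OF X \<sigma> k j]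
    unfolding d_def by (simp add: \<sigma>.hom_div)
qed

end

theorem mainTheorem6:
  fixes emb :: "complex fls \<Rightarrow> 'a::field" and n :: nat and X :: "'a mat"
  assumes "is_alg_closure_of_K emb"
    and "is_cocycle emb n (r_DJ n) X"
  shows "\<exists>Q C. Q \<in> GL_K emb n \<and> C \<in> centralizer n (r_DJ n) \<and> X = Q * C"
proof -
  interpret algebraic_closure_of_K emb
    by unfold_locales (rule assms(1))
  have X: "X \<in> carrier_mat n n" "invertible_mat X"
    using assms(2) unfolding is_cocycle_def by auto
  obtain Q x where "Q \<in> GL_K emb n" "\<forall>j<n. x j \<noteq> 0" "X = Q * mat_diag n x"
    using GL_K_times_diagonal_decomposition[OF X cocycle_column_ratio_in_K[OF assms(2)]] by blast
  then show ?thesis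
    using mat_diag_in_centralizer_r_DJ by blast
qed

end
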